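(* The set $\{[A]\in\mathrm{MALG}: \Phi(A) \text{ is a complete } \boldsymbol{\Pi}^0_3 \text{ set}\}$ is comeager in $\mathrm{MALG}$.
   Context: $2^\omega$ is the Cantor space; $N_s=\{x: s\subset x\}$; $\mu$ the coin-tossing measure with $\mu(N_s)=2^{-\mathrm{lh}(s)}$. For measurable $A$, $\Phi(A)=\{x: \lim_n\mu(A\cap N_{x\restriction n})/\mu(N_{x\restriction n})=1\}$; $\Phi(A)$ depends only on the class $[A]$. $\mathrm{MALG}$ is the set of classes $[A]$ of measurable sets modulo null sets, with the Polish metric $\delta([A],[B])=\mu(A\triangle B)$. A set is complete $\boldsymbol{\Pi}^0_3$ if it is $F_{\sigma\delta}$ and every $F_{\sigma\delta}$ subset of $2^\omega$ is a continuous preimage of it (equivalently it is $F_{\sigma\delta}$ but not $G_{\delta\sigma}$). *)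

theory Defs
  imports "HOL-Probability.Probability"
begin

text \<open>Cantor space 2^omega is the type nat => bool with the product topology
  (bool carries the discrete topology). The coin-tossing measure is the infinite
  product of fair Bernoulli measures.\<close>

type_synonym cantor = "nat \<Rightarrow> bool"

definition coin :: "cantor measure" where
  "coin = PiM UNIV (\<lambda>_::nat. measure_pmf (pmf_of_set (UNIV :: bool set)))"

definition nbhd :: "cantor \<Rightarrow> nat \<Rightarrow> cantor set" where
  "nbhd x n = {y. \<forall>i<n. y i = x i}"

definition Phi :: "cantor set \<Rightarrow> cantor set" where
  "Phi A = {x. (\<lambda>n. measure coin (A \<inter> nbhd x n) / measure coin (nbhd x n)) \<longlonglongrightarrow> 1}"

definition null_eq :: "cantor set \<Rightarrow> cantor set \<Rightarrow> bool" where
  "null_eq A B \<longleftrightarrow> measure coin ((A - B) \<union> (B - A)) = 0"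

definition cls :: "cantor set \<Rightarrow> cantor set set" where
  "cls A = {B \<in> sets coin. null_eq A B}"

definition MALG :: "cantor set set set" where
  "MALG = cls ` sets coin"

definition malg_dist :: "cantor set set \<Rightarrow> cantor set set \<Rightarrow> real" where
  "malg_dist a b = measure coin (((SOME A. A \<in> a) - (SOME B. B \<in> b)) \<union> ((SOME B. B \<in> b) - (SOME A. A \<in> a)))"

definition malg_top :: "cantor set set topology" where
  "malg_top = mtopology_of (metric (MALG, malg_dist))"

definition nowhere_dense_in :: "'a topology \<Rightarrow> 'a set \<Rightarrow> bool" where
  "nowhere_dense_in X N \<longleftrightarrow> N \<subseteq> topspace X \<and> X interior_of (X closure_of N) = {}"

definition meager_in :: "'a topology \<Rightarrow> 'a set \<Rightarrow> bool" where
  "meager_in X S \<longleftrightarrow> (\<exists>N :: nat \<Rightarrow> 'a set. (\<forall>n. nowhere_dense_in X (N n)) \<and> S \<subseteq> (\<Union>n. N n))"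

definition comeager_in :: "'a topology \<Rightarrow> 'a set \<Rightarrow> bool" where
  "comeager_in X S \<longleftrightarrow> meager_in X (topspace X - S)"

definition Pi03 :: "cantor set \<Rightarrow> bool" where
  "Pi03 S \<longleftrightarrow> (\<exists>F :: nat \<Rightarrow> nat \<Rightarrow> cantor set. (\<forall>m n. closed (F m n)) \<and> S = (\<Inter>m. \<Union>n. F m n))"

definition complete_Pi03 :: "cantor set \<Rightarrow> bool" where
  "complete_Pi03 S \<longleftrightarrow> Pi03 S \<and>
     (\<forall>B. Pi03 B \<longrightarrow> (\<exists>f :: cantor \<Rightarrow> cantor. continuous_on UNIV f \<and> B = f -` S))"

end

theory Submission
  imports Defs
begin

text \<open>
  Proof idea.  For a measurable A write dens A x n for the relative measure of A in the
  cylinder N_{x|n}; thus Phi(A) is the set of x with dens A x n \<longrightarrow> 1.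

  (1) Phi(A) is always F_sigma_delta, since each dens A \<cdot> n is locally constant.
  (2) The set finite_rows of points of 2^(omega x omega) all of whose rows are finite
      is hard for F_sigma_delta: every F_sigma_delta set is a continuous preimage of it.
  (3) Call A generic if from every cylinder one can (i) climb to density close to 1
      without ever losing much density on the way, and (ii) dip below density 1/2.
      For generic A we build a continuous map y \<mapsto> reduction y which follows climbs,
      and additionally performs a dip of depth eps m at stage <m,s> whenever y<m,s>
      holds.  Then reduction y \<in> Phi(A) iff every row of y is finite, so Phi(A) is
      complete by (1) and (2).
  (4) In MALG each of the countably many instances of (i) and (ii) defines an open
      dense set (open: densities depend continuously on [A]; dense: modify A on a
      tiny cylinder).  Their intersection consists of generic classes, hence the set
      of classes [A] with Phi(A) complete contains a countable intersection of open
      dense sets, i.e. is comeager.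
\<close>

lemma nowhere_dense_complement:
  assumes "openin X U" "X closure_of U = topspace X"
  shows "nowhere_dense_in X (topspace X - U)"
proof -
  have "closedin X (topspace X - U)" using assms(1) by blast
  then show ?thesis
    unfolding nowhere_dense_in_def
    by (simp add: closure_of_closedin interior_of_complement assms(2))
qed

lemma comeager_if_contains_open_dense_inter:
  fixes U :: "nat \<Rightarrow> 'a set"
  assumes "\<And>i. openin X (U i)" "\<And>i. X closure_of U i = topspace X"
    and "topspace X \<inter> (\<Inter>i. U i) \<subseteq> S"
  shows "comeager_in X S"
  unfolding comeager_in_def meager_in_def
proof (intro exI conjI allI)
  show "nowhere_dense_in X (topspace X - U i)" for i
    by (rule nowhere_dense_complement[OF assms(1,2)])
  show "topspace X - S \<subseteq> (\<Union>i. topspace X - U i)" using assms(3) by blast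
qed

lemma nbhd_self: "x \<in> nbhd x n"
  by (simp add: nbhd_def)

lemma nbhd_anti: "m \<le> n \<Longrightarrow> nbhd x n \<subseteq> nbhd x m"
  unfolding nbhd_def by auto

lemma nbhd_cong: "(\<And>i. i < n \<Longrightarrow> y i = z i) \<Longrightarrow> nbhd y n = nbhd z n"
  unfolding nbhd_def by auto

lemma nbhd_mem_cong: "y \<in> nbhd x n \<Longrightarrow> nbhd y n = nbhd x n"
  unfolding nbhd_def by auto

lemma nbhd_split:
  "nbhd z n = nbhd (z(n:=True)) (Suc n) \<union> nbhd (z(n:=False)) (Suc n)"
  "nbhd (z(n:=True)) (Suc n) \<inter> nbhd (z(n:=False)) (Suc n) = {}"
  unfolding nbhd_def by (auto simp: less_Suc_eq)

lemma nbhd_open: "open (nbhd x n)"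
proof -
  have "open {f::cantor. \<forall>i\<in>{..<n}. f (id i) \<in> {x i}}"
    by (rule product_topology_basis') (auto intro: discrete_topology_class.open_discrete)
  moreover have "{f::cantor. \<forall>i\<in>{..<n}. f (id i) \<in> {x i}} = nbhd x n"
    by (auto simp: nbhd_def)
  ultimately show ?thesis by simp
qed

lemma open_contains_nbhd:
  assumes "open (U::cantor set)" "x \<in> U"
  shows "\<exists>n. nbhd x n \<subseteq> U"
proof -
  have "openin (product_topology (\<lambda>i. euclidean) UNIV) U"
    using assms unfolding open_fun_def by auto
  from product_topology_open_contains_basis[OF this assms(2)]
  obtain X where X: "x \<in> (\<Pi>\<^sub>E i\<in>UNIV. X i)" "finite {i. X i \<noteq> UNIV}" "(\<Pi>\<^sub>E i\<in>UNIV. X i) \<subseteq> U"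
    by auto
  obtain n where n: "{i. X i \<noteq> UNIV} \<subseteq> {..<n}"
    using X(2) finite_nat_bounded by blast
  have "y i \<in> X i" if "y \<in> nbhd x n" for y i
  proof (cases "X i = UNIV")
    case False
    then have "y i = x i" using n that by (auto simp: nbhd_def)
    then show ?thesis using X(1) by (simp add: PiE_UNIV_domain Pi_iff)
  qed auto
  then have "nbhd x n \<subseteq> (\<Pi>\<^sub>E i\<in>UNIV. X i)" by (auto simp: PiE_UNIV_domain)
  then show ?thesis using X(3) by blast
qed

lemma closed_if_locally_determined:
  assumes "\<And>x. \<exists>n. \<forall>y\<in>nbhd x n. (y \<in> S) = (x \<in> S)"
  shows "closed (S::cantor set)"
  unfolding closed_def
proof (subst open_subopen, intro ballI)
  fix x assume "x \<in> - S"
  obtain n where "\<forall>y\<in>nbhd x n. (y \<in> S) = (x \<in> S)" using assms by blast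
  then have "nbhd x n \<subseteq> - S" using \<open>x \<in> - S\<close> by auto
  then show "\<exists>T. open T \<and> x \<in> T \<and> T \<subseteq> - S" using nbhd_open[of x n] nbhd_self[of x n] by blast
qed

lemma continuous_if_locally_constant:
  fixes h :: "cantor \<Rightarrow> 'b::topological_space"
  assumes "\<And>x. \<exists>n. \<forall>y\<in>nbhd x n. h y = h x"
  shows "continuous_on UNIV h"
proof (subst continuous_on_open_vimage[OF open_UNIV], intro allI impI)
  fix B :: "'b set" assume "open B"
  show "open (h -` B \<inter> UNIV)"
  proof (subst open_subopen, intro ballI)
    fix x assume "x \<in> h -` B \<inter> UNIV"
    obtain n where "\<forall>y\<in>nbhd x n. h y = h x" using assms by blast
    then have "nbhd x n \<subseteq> h -` B \<inter> UNIV" using \<open>x \<in> h -` B \<inter> UNIV\<close> by auto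
    then show "\<exists>T. open T \<and> x \<in> T \<and> T \<subseteq> h -` B \<inter> UNIV" using nbhd_open[of x n] nbhd_self[of x n] by blast
  qed
qed

lemma continuous_if_bits_locally_constant:
  fixes f :: "cantor \<Rightarrow> cantor"
  assumes "\<And>x i. \<exists>n. \<forall>y\<in>nbhd x n. f y i = f x i"
  shows "continuous_on UNIV f"
  by (rule continuous_on_coordinatewise_then_product, rule continuous_if_locally_constant, rule assms)

lemma prob_coin: "prob_space coin"
  unfolding coin_def by (rule prob_space_PiM) (simp add: prob_space_measure_pmf)

interpretation C: prob_space coin by (rule prob_coin)

lemma nbhd_emb:
  "nbhd x n = prod_emb UNIV (\<lambda>_::nat. measure_pmf (pmf_of_set (UNIV :: bool set))) {..<n}
                (PiE {..<n} (\<lambda>i. {x i}))"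
proof -
  have "space (PiM UNIV (\<lambda>_::nat. measure_pmf (pmf_of_set (UNIV :: bool set)))) = UNIV"
    by (simp add: space_PiM PiE_UNIV_domain)
  moreover have "restrict y {..<n} \<in> PiE {..<n} (\<lambda>i. {x i}) \<longleftrightarrow> (\<forall>i<n. y i = x i)" for y :: cantor
    unfolding restrict_PiE_iff by blast
  ultimately show ?thesis unfolding prod_emb_def nbhd_def by auto
qed

lemma nbhd_sets: "nbhd x n \<in> sets coin"
  unfolding coin_def nbhd_emb by (rule sets_PiM_I) simp_all

lemma nbhd_measure: "measure coin (nbhd x n) = (1/2)^n"
proof -
  have half: "emeasure (measure_pmf (pmf_of_set (UNIV :: bool set))) {b} = ennreal (1/2)" for b
    by (simp add: emeasure_pmf_single pmf_of_set)
  have "emeasure coin (nbhd x n) = (\<Prod>i\<in>{..<n}. emeasure (measure_pmf (pmf_of_set (UNIV :: bool set))) {x i})"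
    unfolding coin_def nbhd_emb by (rule emeasure_PiM_emb) (simp_all add: prob_space_measure_pmf)
  also have "\<dots> = (\<Prod>i\<in>{..<n}. ennreal (1/2))" by (simp only: half)
  also have "\<dots> = ennreal ((1/2)^n)"
    by (simp only: prod_constant card_lessThan) (rule ennreal_power, simp)
  finally show ?thesis unfolding measure_def by simp
qed


definition dens :: "cantor set \<Rightarrow> cantor \<Rightarrow> nat \<Rightarrow> real" where
  "dens A x n = measure coin (A \<inter> nbhd x n) / measure coin (nbhd x n)"

lemma Phi_dens: "Phi A = {x. (\<lambda>n. dens A x n) \<longlonglongrightarrow> 1}"
  unfolding Phi_def dens_def ..

lemma dens_eq: "dens A x n = measure coin (A \<inter> nbhd x n) * 2^n"
  unfolding dens_def nbhd_measure by (simp add: power_divide)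

lemma dens_cong: "(\<And>i. i < n \<Longrightarrow> y i = x i) \<Longrightarrow> dens A y n = dens A x n"
  unfolding dens_def using nbhd_cong by metis

lemma dens_local: "y \<in> nbhd x n \<Longrightarrow> dens A y n = dens A x n"
  by (rule dens_cong) (simp add: nbhd_def)

lemma dens_le1: "A \<in> sets coin \<Longrightarrow> dens A x n \<le> 1"
  unfolding dens_def nbhd_measure
  using C.finite_measure_mono[of "A \<inter> nbhd x n" "nbhd x n"] nbhd_sets nbhd_measure by simp

lemma dens_mono_set:
  assumes "A \<subseteq> B" "B \<in> sets coin"
  shows "dens A x n \<le> dens B x n"
proof -
  have "measure coin (A \<inter> nbhd x n) \<le> measure coin (B \<inter> nbhd x n)"
    by (rule C.finite_measure_mono) (use assms nbhd_sets in auto)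
  then show ?thesis unfolding dens_eq by simp
qed

lemma dens_full: "nbhd x n \<subseteq> B \<Longrightarrow> dens B x n = 1"
  unfolding dens_def by (simp add: Int_absorb1 nbhd_measure)

lemma dens_empty: "B \<inter> nbhd x n = {} \<Longrightarrow> dens B x n = 0"
  unfolding dens_def by simp

lemma dens_split:
  assumes "A \<in> sets coin"
  shows "dens A (z(n:=True)) (Suc n) + dens A (z(n:=False)) (Suc n) = 2 * dens A z n"
proof -
  have "A \<inter> nbhd z n = (A \<inter> nbhd (z(n:=True)) (Suc n)) \<union> (A \<inter> nbhd (z(n:=False)) (Suc n))"
    using nbhd_split(1)[of z n] by blast
  moreover have "(A \<inter> nbhd (z(n:=True)) (Suc n)) \<inter> (A \<inter> nbhd (z(n:=False)) (Suc n)) = {}"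
    using nbhd_split(2)[of z n] by blast
  ultimately have "measure coin (A \<inter> nbhd z n) =
      measure coin (A \<inter> nbhd (z(n:=True)) (Suc n)) + measure coin (A \<inter> nbhd (z(n:=False)) (Suc n))"
    by (metis C.finite_measure_Union sets.Int assms nbhd_sets)
  then show ?thesis unfolding dens_eq by (simp add: algebra_simps)
qed

lemma dens_child_lower:
  assumes "A \<in> sets coin"
  shows "dens A y (Suc n) \<ge> 2 * dens A y n - 1"
proof -
  have "dens A (y(n := \<not> y n)) (Suc n) \<le> 1" by (rule dens_le1[OF assms])
  then show ?thesis using dens_split[OF assms, of y n] by (cases "y n") (simp_all add: fun_upd_idem)
qed

lemma dens_greedy:
  assumes "A \<in> sets coin"
  shows "\<exists>b. dens A (y(n:=b)) (Suc n) \<ge> dens A y n"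
proof -
  have "dens A (y(n:=True)) (Suc n) \<ge> dens A y n \<or> dens A (y(n:=False)) (Suc n) \<ge> dens A y n"
    using dens_split[OF assms, of y n] by linarith
  then show ?thesis by blast
qed

lemma dens_perturb:
  assumes "A \<in> sets coin" "B \<in> sets coin" "n \<le> N"
  shows "\<bar>dens A x n - dens B x n\<bar> \<le> 2^N * measure coin ((A - B) \<union> (B - A))"
proof -
  let ?d = "measure coin ((A - B) \<union> (B - A))"
  have "measure coin (A \<inter> nbhd x n) \<le> measure coin ((B \<inter> nbhd x n) \<union> ((A - B) \<union> (B - A)))"
    by (rule C.finite_measure_mono) (use assms nbhd_sets in auto)
  also have "\<dots> \<le> measure coin (B \<inter> nbhd x n) + ?d"
    by (rule measure_Un_le) (use assms nbhd_sets in auto)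
  finally have 1: "measure coin (A \<inter> nbhd x n) \<le> measure coin (B \<inter> nbhd x n) + ?d" .
  have "measure coin (B \<inter> nbhd x n) \<le> measure coin ((A \<inter> nbhd x n) \<union> ((A - B) \<union> (B - A)))"
    by (rule C.finite_measure_mono) (use assms nbhd_sets in auto)
  also have "\<dots> \<le> measure coin (A \<inter> nbhd x n) + ?d"
    by (rule measure_Un_le) (use assms nbhd_sets in auto)
  finally have 2: "measure coin (B \<inter> nbhd x n) \<le> measure coin (A \<inter> nbhd x n) + ?d" .
  have "\<bar>dens A x n - dens B x n\<bar> = \<bar>measure coin (A \<inter> nbhd x n) - measure coin (B \<inter> nbhd x n)\<bar> * 2^n"
    unfolding dens_eq by (simp add: abs_mult left_diff_distrib[symmetric])
  also have "\<dots> \<le> ?d * 2^n"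
    using 1 2 by (intro mult_right_mono) (linarith, simp)
  also have "\<dots> \<le> ?d * 2^N"
    using assms(3) by (intro mult_left_mono power_increasing) simp_all
  finally show ?thesis by (simp only: mult.commute)
qed

lemma dens_null_eq:
  assumes "A \<in> sets coin" "B \<in> sets coin" "null_eq A B"
  shows "dens A = dens B"
proof
  fix x show "dens A x = dens B x"
    using dens_perturb[OF assms(1,2) order_refl, of x] assms(3) unfolding null_eq_def by fastforce
qed

section \<open>Phi(A) is F_sigma_delta\<close>

lemma LIMSEQ_iff_inverse_Suc:
  fixes X :: "nat \<Rightarrow> real"
  shows "X \<longlonglongrightarrow> L \<longleftrightarrow> (\<forall>k. \<exists>N. \<forall>n\<ge>N. \<bar>X n - L\<bar> \<le> 1 / real (Suc k))"
proof
  assume lim: "X \<longlonglongrightarrow> L"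
  show "\<forall>k. \<exists>N. \<forall>n\<ge>N. \<bar>X n - L\<bar> \<le> 1 / real (Suc k)"
  proof
    fix k
    obtain N where "\<forall>n\<ge>N. norm (X n - L) < 1 / real (Suc k)"
      using LIMSEQ_D[OF lim, of "1 / real (Suc k)"] by auto
    then show "\<exists>N. \<forall>n\<ge>N. \<bar>X n - L\<bar> \<le> 1 / real (Suc k)" by (auto intro: less_imp_le)
  qed
next
  assume R: "\<forall>k. \<exists>N. \<forall>n\<ge>N. \<bar>X n - L\<bar> \<le> 1 / real (Suc k)"
  show "X \<longlonglongrightarrow> L"
  proof (rule LIMSEQ_I)
    fix r :: real assume "0 < r"
    then obtain k where k: "inverse (real (Suc k)) < r" using reals_Archimedean by blast
    obtain N where "\<forall>n\<ge>N. \<bar>X n - L\<bar> \<le> 1 / real (Suc k)" using R by blast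
    then show "\<exists>N. \<forall>n\<ge>N. norm (X n - L) < r"
      using k by (auto simp: divide_inverse intro: le_less_trans)
  qed
qed

lemma Pi03_Phi: "Pi03 (Phi A)"
proof -
  define F where "F = (\<lambda>k N. \<Inter>n\<in>{N..}. {x. \<bar>dens A x n - 1\<bar> \<le> 1 / real (Suc k)})"
  have "closed (F k N)" for k N
    unfolding F_def
  proof (intro closed_INT ballI closed_if_locally_determined)
    show "\<exists>m. \<forall>y\<in>nbhd x m. (y \<in> {x. \<bar>dens A x n - 1\<bar> \<le> 1 / real (Suc k)}) =
                                (x \<in> {x. \<bar>dens A x n - 1\<bar> \<le> 1 / real (Suc k)})" for n x
      by (rule exI[of _ n]) (simp add: dens_local)
  qed
  moreover have "Phi A = (\<Inter>k. \<Union>N. F k N)"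
    unfolding Phi_dens F_def LIMSEQ_iff_inverse_Suc by (auto simp: atLeast_def)
  ultimately show ?thesis unfolding Pi03_def by blast
qed

section \<open>A complete F_sigma_delta set\<close>

text \<open>Reading a point y of Cantor space as a subset of omega x omega (via prod_encode),
  finite_rows is the set of y all of whose rows are finite.\<close>
definition finite_rows :: "cantor set" where
  "finite_rows = {y. \<forall>m. finite {s. y (prod_encode (m, s))}}"

lemma mono_finite_changes_imp_bounded:
  fixes g :: "nat \<Rightarrow> nat"
  assumes "mono g" "finite {s. g (Suc s) \<noteq> g s}"
  shows "\<exists>K. \<forall>s. g s \<le> K"
proof -
  obtain S0 where S0: "{s. g (Suc s) \<noteq> g s} \<subseteq> {..<S0}" using assms(2) finite_nat_bounded by blast
  have const: "g (S0 + d) = g S0" for d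
  proof (induction d)
    case (Suc d)
    have "g (Suc (S0 + d)) = g (S0 + d)" using S0 by fastforce
    then show ?case using Suc by simp
  qed simp
  have "g s \<le> g S0" for s
  proof (cases "s \<le> S0")
    case True then show ?thesis using assms(1) by (simp add: monoD)
  next
    case False then show ?thesis using const[of "s - S0"] by simp
  qed
  then show ?thesis by blast
qed

lemma mono_bounded_imp_finite_changes:
  fixes g :: "nat \<Rightarrow> nat"
  assumes "mono g" "\<And>s. g s \<le> K"
  shows "finite {s. g (Suc s) \<noteq> g s}"
proof -
  have "range g \<subseteq> {..K}" using assms(2) by auto
  then have fin: "finite (range g)" by (rule finite_subset) simp
  have "Max (range g) \<in> range g" using fin by (rule Max_in) simp
  then obtain S0 where S0: "Max (range g) = g S0" by blast
  have const: "g s = g S0" if "S0 \<le> s" for s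
  proof (rule antisym)
    show "g s \<le> g S0" unfolding S0[symmetric] using fin by (rule Max_ge) simp
    show "g S0 \<le> g s" using assms(1) that by (rule monoD)
  qed
  have "{s. g (Suc s) \<noteq> g s} \<subseteq> {..<S0}"
  proof
    fix s assume "s \<in> {s. g (Suc s) \<noteq> g s}"
    then show "s \<in> {..<S0}" using const[of s] const[of "Suc s"] by (cases "S0 \<le> s") auto
  qed
  then show ?thesis by (rule finite_subset) simp
qed

definition miss_count :: "(nat \<Rightarrow> cantor set) \<Rightarrow> cantor \<Rightarrow> nat \<Rightarrow> nat" where
  "miss_count G x s = card {n. n \<le> s \<and> nbhd x s \<inter> G n = {}}"

lemma miss_count_mono: "mono (miss_count G x)"
proof (rule monoI)
  fix s s' :: nat assume "s \<le> s'"
  then have "{n. n \<le> s \<and> nbhd x s \<inter> G n = {}} \<subseteq> {n. n \<le> s' \<and> nbhd x s' \<inter> G n = {}}"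
    using nbhd_anti[of s s' x] by auto
  then show "miss_count G x s \<le> miss_count G x s'" unfolding miss_count_def by (rule card_mono[rotated]) simp
qed

lemma miss_count_local: "y \<in> nbhd x s \<Longrightarrow> miss_count G y s = miss_count G x s"
  unfolding miss_count_def by (simp add: nbhd_mem_cong)

text \<open>For an increasing sequence of closed sets, x lies in the union iff the miss count
  stays bounded: if x \<in> G n only G 0, ..., G (n-1) can be missed, and if x \<notin> G K then
  a small cylinder around x misses all of G 0, ..., G K.\<close>
lemma miss_count_bounded_iff:
  assumes closed: "\<And>n. closed (G n)" and incr: "\<And>n n'. n \<le> n' \<Longrightarrow> G n \<subseteq> G n'"
  shows "(\<exists>K. \<forall>s. miss_count G x s \<le> K) \<longleftrightarrow> x \<in> (\<Union>n. G n)"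
proof
  assume "x \<in> (\<Union>n. G n)"
  then obtain n where n: "x \<in> G n" by blast
  have "{n'. n' \<le> s \<and> nbhd x s \<inter> G n' = {}} \<subseteq> {..<n}" for s
  proof
    fix n' assume "n' \<in> {n'. n' \<le> s \<and> nbhd x s \<inter> G n' = {}}"
    moreover have "n \<le> n' \<Longrightarrow> x \<in> nbhd x s \<inter> G n'" using n incr nbhd_self by blast
    ultimately show "n' \<in> {..<n}" by (auto simp: not_le)
  qed
  then have "miss_count G x s \<le> n" for s
    unfolding miss_count_def by (metis card_lessThan card_mono finite_lessThan)
  then show "\<exists>K. \<forall>s. miss_count G x s \<le> K" by blast
next
  assume "\<exists>K. \<forall>s. miss_count G x s \<le> K"
  then obtain K where K: "\<And>s. miss_count G x s \<le> K" by blast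
  show "x \<in> (\<Union>n. G n)"
  proof (rule ccontr)
    assume "x \<notin> (\<Union>n. G n)"
    then obtain s0 where s0: "nbhd x s0 \<subseteq> - G K"
      using open_contains_nbhd[of "- G K" x] closed by (auto simp: open_Compl)
    define s where "s = max s0 K"
    have "nbhd x s \<inter> G n = {}" if "n \<le> K" for n
      using s0 incr[OF that] nbhd_anti[of s0 s x] unfolding s_def by auto
    then have "{..K} \<subseteq> {n. n \<le> s \<and> nbhd x s \<inter> G n = {}}" unfolding s_def by auto
    then have "card {..K} \<le> miss_count G x s" unfolding miss_count_def by (rule card_mono[rotated]) simp
    then show False using K[of s] by simp
  qed
qed

text \<open>finite_rows is F_sigma_delta-hard: row m of the image of x records the stages s at
  which the miss count for the m-th F_sigma set increases.\<close>
lemma reduce_to_finite_rows: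
  assumes "Pi03 B"
  shows "\<exists>f :: cantor \<Rightarrow> cantor. continuous_on UNIV f \<and> B = f -` finite_rows"
proof -
  obtain F :: "nat \<Rightarrow> nat \<Rightarrow> cantor set" where F: "\<And>m n. closed (F m n)" "B = (\<Inter>m. \<Union>n. F m n)"
    using assms unfolding Pi03_def by blast
  define G where "G = (\<lambda>m n. \<Union>n'\<in>{..n}. F m n')"
  have G_closed: "closed (G m n)" for m n unfolding G_def using F(1) by (intro closed_UN) auto
  have G_incr: "n \<le> n' \<Longrightarrow> G m n \<subseteq> G m n'" for m n n' unfolding G_def by (fastforce intro: le_trans)
  have G_Union: "(\<Union>n. G m n) = (\<Union>n. F m n)" for m unfolding G_def by auto
  define f where "f = (\<lambda>x k. case prod_decode k of (m, s) \<Rightarrow> miss_count (G m) x (Suc s) \<noteq> miss_count (G m) x s)"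
  have "continuous_on UNIV f"
  proof (rule continuous_if_bits_locally_constant)
    fix x k
    obtain m s where ms: "prod_decode k = (m, s)" by (cases "prod_decode k")
    have "f y k = f x k" if "y \<in> nbhd x (Suc s)" for y
      using that nbhd_anti[of s "Suc s" x] unfolding f_def ms by (auto simp: miss_count_local)
    then show "\<exists>n. \<forall>y\<in>nbhd x n. f y k = f x k" by blast
  qed
  moreover have "x \<in> B \<longleftrightarrow> f x \<in> finite_rows" for x
  proof -
    have "f x (prod_encode (m, s)) = (miss_count (G m) x (Suc s) \<noteq> miss_count (G m) x s)" for m s
      unfolding f_def by simp
    moreover have "x \<in> (\<Union>n. F m n) \<longleftrightarrow> (\<exists>K. \<forall>s. miss_count (G m) x s \<le> K)" for m
      unfolding G_Union[symmetric] by (rule miss_count_bounded_iff[symmetric]) (use G_closed G_incr in auto)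
    moreover have "(\<exists>K. \<forall>s. miss_count (G m) x s \<le> K) \<longleftrightarrow>
        finite {s. miss_count (G m) x (Suc s) \<noteq> miss_count (G m) x s}" for m
      using mono_finite_changes_imp_bounded[OF miss_count_mono] mono_bounded_imp_finite_changes[OF miss_count_mono]
      by blast
    ultimately show ?thesis unfolding F(2) finite_rows_def by simp
  qed
  ultimately show ?thesis by blast
qed

section \<open>Generic sets and the reduction\<close>

definition can_climb :: "cantor set \<Rightarrow> cantor \<Rightarrow> nat \<Rightarrow> nat \<Rightarrow> nat \<Rightarrow> bool" where
  "can_climb A z n k j \<longleftrightarrow> (\<exists>z' n'. n < n' \<and> (\<forall>i<n. z' i = z i) \<and> dens A z' n' > 1 - 1 / real (Suc k) \<and>
      (\<forall>i. n \<le> i \<and> i \<le> n' \<longrightarrow> dens A z' i > dens A z n - 1 / real (Suc j)))"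

definition can_dip :: "cantor set \<Rightarrow> cantor \<Rightarrow> nat \<Rightarrow> bool" where
  "can_dip A z n \<longleftrightarrow> (\<exists>z' n'. n \<le> n' \<and> (\<forall>i<n. z' i = z i) \<and> dens A z' n' < 1/2)"

text \<open>Depth of the dips used to witness an infinite row m.\<close>
definition eps :: "nat \<Rightarrow> real" where
  "eps m = (1/2) ^ Suc m"

lemma eps_pos: "eps m > 0"
  unfolding eps_def by simp

lemma eps_le: "eps m \<le> 1/2"
  unfolding eps_def by (simp add: power_le_one)

lemma eps_mono: "m \<le> m' \<Longrightarrow> eps m' \<le> eps m"
  unfolding eps_def by (rule power_decreasing) auto

locale generic_set =
  fixes A :: "cantor set"
  assumes measurable: "A \<in> sets coin"
    and climbs: "\<And>z n k j. can_climb A z n k j"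
    and dips: "\<And>z n. can_dip A z n"
begin

definition climb_ok :: "cantor \<Rightarrow> nat \<Rightarrow> nat \<Rightarrow> cantor \<times> nat \<Rightarrow> bool" where
  "climb_ok z n k p \<longleftrightarrow> n < snd p \<and> (\<forall>i<n. fst p i = z i) \<and>
      dens A (fst p) (snd p) > 1 - 1 / real (Suc (Suc k)) \<and>
      (\<forall>i. n \<le> i \<and> i \<le> snd p \<longrightarrow> dens A (fst p) i > dens A z n - 1 / real (Suc k))"

definition climb :: "cantor \<Rightarrow> nat \<Rightarrow> nat \<Rightarrow> cantor \<times> nat" where
  "climb z n k = (SOME p. climb_ok z n k p)"

lemma climb_spec: "climb_ok z n k (climb z n k)"
proof -
  obtain z' n' where "climb_ok z n k (z', n')"
    using climbs[of z n "Suc k" k] unfolding can_climb_def climb_ok_def by auto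
  then show ?thesis unfolding climb_def by (rule someI)
qed

text \<open>dip z n m: follow a chosen dip below 1/2, but stop at the first level where the
  density is at most 1 - eps m; by dens_child_lower the density stays above
  1 - 2 eps m before that level.\<close>
definition dip_target :: "cantor \<Rightarrow> nat \<Rightarrow> cantor" where
  "dip_target z n = (SOME z'. \<exists>n'. n \<le> n' \<and> (\<forall>i<n. z' i = z i) \<and> dens A z' n' < 1/2)"

definition dip :: "cantor \<Rightarrow> nat \<Rightarrow> nat \<Rightarrow> cantor \<times> nat" where
  "dip z n m = (dip_target z n, LEAST i. n \<le> i \<and> dens A (dip_target z n) i \<le> 1 - eps m)"

lemma dip_target_spec: "\<exists>n'. n \<le> n' \<and> (\<forall>i<n. dip_target z n i = z i) \<and> dens A (dip_target z n) n' < 1/2"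
proof -
  have "\<exists>z' n'. n \<le> n' \<and> (\<forall>i<n. z' i = z i) \<and> dens A z' n' < 1/2"
    using dips[of z n] unfolding can_dip_def .
  then show ?thesis unfolding dip_target_def by (rule someI_ex)
qed

lemma dip_spec:
  assumes "dip z n m = (w, i)"
  shows "n \<le> i" "\<forall>l<n. w l = z l" "dens A w i \<le> 1 - eps m"
    "\<forall>l. n \<le> l \<and> l \<le> i \<longrightarrow> dens A w l \<ge> min (dens A z n) (1 - 2 * eps m)"
proof -
  obtain n' where n': "n \<le> n'" "\<forall>l<n. w l = z l" "dens A w n' < 1/2"
    using dip_target_spec[of n z] assms unfolding dip_def by auto
  have i: "i = (LEAST i. n \<le> i \<and> dens A w i \<le> 1 - eps m)"
    using assms unfolding dip_def by auto
  have P: "n \<le> i \<and> dens A w i \<le> 1 - eps m"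
    unfolding i by (rule LeastI[of _ n']) (use n' eps_le[of m] in simp)
  then show "n \<le> i" "dens A w i \<le> 1 - eps m" by simp_all
  show "\<forall>l<n. w l = z l" by (rule n'(2))
  show "\<forall>l. n \<le> l \<and> l \<le> i \<longrightarrow> dens A w l \<ge> min (dens A z n) (1 - 2 * eps m)"
  proof (intro allI impI)
    fix l assume l: "n \<le> l \<and> l \<le> i"
    show "dens A w l \<ge> min (dens A z n) (1 - 2 * eps m)"
    proof (cases "l = n")
      case True
      have "dens A w n = dens A z n" by (rule dens_cong) (use n'(2) in simp)
      then show ?thesis using True by simp
    next
      case False
      then obtain l' where l': "l = Suc l'" "n \<le> l'" using l by (cases l) auto
      then have "\<not> (n \<le> l' \<and> dens A w l' \<le> 1 - eps m)"
        using l unfolding i by (intro not_less_Least) (simp add: i[symmetric])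
      then have "dens A w l' > 1 - eps m" using l' by simp
      then show ?thesis using dens_child_lower[OF measurable, of w l'] l' by simp
    qed
  qed
qed

definition prestep :: "bool \<Rightarrow> cantor \<Rightarrow> nat \<Rightarrow> nat \<Rightarrow> cantor \<times> nat" where
  "prestep b z n m = (if b then dip z n m else (z, n))"

lemma prestep_spec:
  assumes "prestep b z n m = (w, i)"
  shows "n \<le> i" "\<forall>l<n. w l = z l"
    "\<forall>l. n \<le> l \<and> l \<le> i \<longrightarrow> dens A w l \<ge> min (dens A z n) (if b then 1 - 2 * eps m else 1)"
    "b \<Longrightarrow> dens A w i \<le> 1 - eps m"
  using assms dip_spec[of z n m w i] unfolding prestep_def by (auto split: if_splits)

definition step :: "bool \<Rightarrow> nat \<Rightarrow> cantor \<times> nat \<Rightarrow> cantor \<times> nat" where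
  "step b k p = (case prestep b (fst p) (snd p) (fst (prod_decode k)) of (w, i) \<Rightarrow> climb w i k)"

lemma step_spec:
  assumes "step b k (z, n) = (z2, n2)"
  defines "m \<equiv> fst (prod_decode k)"
  shows "n < n2" "\<forall>i<n. z2 i = z i" "dens A z2 n2 > 1 - 1 / real (Suc (Suc k))"
    "\<forall>l. n \<le> l \<and> l \<le> n2 \<longrightarrow>
        dens A z2 l \<ge> min (dens A z n) (if b then 1 - 2 * eps m else 1) - 1 / real (Suc k)"
    "b \<Longrightarrow> \<exists>l. n \<le> l \<and> l \<le> n2 \<and> dens A z2 l \<le> 1 - eps m"
proof -
  obtain w i where wi: "prestep b z n m = (w, i)" by (cases "prestep b z n m")
  note pre = prestep_spec[OF wi]
  have "climb w i k = (z2, n2)" using assms(1) wi unfolding step_def m_def by simp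
  then have c: "i < n2" "\<forall>l<i. z2 l = w l" "dens A z2 n2 > 1 - 1 / real (Suc (Suc k))"
      "\<forall>l. i \<le> l \<and> l \<le> n2 \<longrightarrow> dens A z2 l > dens A w i - 1 / real (Suc k)"
    using climb_spec[of w i k] unfolding climb_ok_def by auto
  have same: "dens A z2 l = dens A w l" if "l \<le> i" for l
    by (rule dens_cong) (use c(2) that in simp)
  show "n < n2" "\<forall>l<n. z2 l = z l" "dens A z2 n2 > 1 - 1 / real (Suc (Suc k))"
    using pre(1,2) c(1,2,3) by auto
  show "\<forall>l. n \<le> l \<and> l \<le> n2 \<longrightarrow>
        dens A z2 l \<ge> min (dens A z n) (if b then 1 - 2 * eps m else 1) - 1 / real (Suc k)"
  proof (intro allI impI)
    fix l assume l: "n \<le> l \<and> l \<le> n2"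
    show "dens A z2 l \<ge> min (dens A z n) (if b then 1 - 2 * eps m else 1) - 1 / real (Suc k)"
    proof (cases "l \<le> i")
      case True
      have "dens A w l \<ge> min (dens A z n) (if b then 1 - 2 * eps m else 1)" using pre(3) l True by blast
      moreover have "0 \<le> 1 / real (Suc k)" by simp
      ultimately show ?thesis using same[OF True] by linarith
    next
      case False
      have "dens A z2 l > dens A w i - 1 / real (Suc k)" using c(4) l False by simp
      moreover have "dens A w i \<ge> min (dens A z n) (if b then 1 - 2 * eps m else 1)" using pre(1,3) by simp
      ultimately show ?thesis by linarith
    qed
  qed
  show "\<exists>l. n \<le> l \<and> l \<le> n2 \<and> dens A z2 l \<le> 1 - eps m" if b
    using pre(1) pre(4)[OF that] c(1) same[of i] by (intro exI[of _ i]) simp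
qed

text \<open>The stages driven by y: stage k + 1 inserts a dip for row m iff y k, where
  k = prod_encode (m, s).\<close>
primrec stage :: "cantor \<Rightarrow> nat \<Rightarrow> cantor \<times> nat" where
  "stage y 0 = (\<lambda>_. False, 0)"
| "stage y (Suc k) = step (y k) k (stage y k)"

abbreviation stage_pt :: "cantor \<Rightarrow> nat \<Rightarrow> cantor" where "stage_pt y k \<equiv> fst (stage y k)"
abbreviation stage_len :: "cantor \<Rightarrow> nat \<Rightarrow> nat" where "stage_len y k \<equiv> snd (stage y k)"

lemma stage_step:
  "step (y k) k (stage_pt y k, stage_len y k) = (stage_pt y (Suc k), stage_len y (Suc k))"
  by simp

lemma stage_len_ge: "k \<le> stage_len y k"
proof (induction k)
  case (Suc k) then show ?case using step_spec(1)[OF stage_step[of y k]] by simp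
qed simp

lemma stage_len_mono: "k \<le> k' \<Longrightarrow> stage_len y k \<le> stage_len y k'"
proof (induction k' rule: dec_induct)
  case (step k') then show ?case using step_spec(1)[OF stage_step[of y k']] by simp
qed simp

lemma stage_pt_agree: "k \<le> k' \<Longrightarrow> i < stage_len y k \<Longrightarrow> stage_pt y k' i = stage_pt y k i"
proof (induction k' rule: dec_induct)
  case (step k')
  have "i < stage_len y k'" using stage_len_mono[OF step(1), of y] step(4) by simp
  then show ?case using step_spec(2)[OF stage_step[of y k']] step(3,4) by simp
qed simp

definition reduction :: "cantor \<Rightarrow> cantor" where
  "reduction y = (\<lambda>i. stage_pt y (Suc i) i)"

lemma reduction_agree: "i < stage_len y k \<Longrightarrow> reduction y i = stage_pt y k i"
  unfolding reduction_def
  using stage_pt_agree[of "Suc i" k i y] stage_pt_agree[of k "Suc i" i y] stage_len_ge[of "Suc i" y]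
  by (cases "Suc i \<le> k") auto

lemma dens_reduction: "l \<le> stage_len y k \<Longrightarrow> dens A (reduction y) l = dens A (stage_pt y k) l"
  by (rule dens_cong) (simp add: reduction_agree)

lemma stage_cong: "(\<And>j. j < k \<Longrightarrow> y j = y' j) \<Longrightarrow> stage y k = stage y' k"
  by (induction k) auto

lemma reduction_continuous: "continuous_on UNIV reduction"
proof (rule continuous_if_bits_locally_constant)
  fix y :: cantor and i
  have "reduction y' i = reduction y i" if "y' \<in> nbhd y (Suc i)" for y'
    using stage_cong[of "Suc i" y' y] that unfolding reduction_def nbhd_def by simp
  then show "\<exists>n. \<forall>y'\<in>nbhd y n. reduction y' i = reduction y i" by blast
qed

lemma find_stage:
  assumes "stage_len y K \<le> l"
  shows "\<exists>k. K \<le> k \<and> stage_len y k \<le> l \<and> l \<le> stage_len y (Suc k)"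
proof -
  have ex: "\<exists>k. l < stage_len y (Suc k)" using stage_len_ge[of "Suc l" y] by (intro exI[of _ l]) simp
  define k where "k = (LEAST k. l < stage_len y (Suc k))"
  have k1: "l < stage_len y (Suc k)" unfolding k_def by (rule LeastI_ex[OF ex])
  have k2: "stage_len y k \<le> l"
  proof (cases k)
    case (Suc k')
    then have "\<not> l < stage_len y (Suc k')" unfolding k_def by (metis Suc k_def lessI not_less_Least)
    then show ?thesis using Suc by simp
  qed simp
  have "K \<le> k"
  proof (rule ccontr)
    assume "\<not> K \<le> k"
    then have "stage_len y (Suc k) \<le> stage_len y K" by (intro stage_len_mono) simp
    then show False using k1 assms by simp
  qed
  then show ?thesis using k1 k2 by auto
qed

lemma dens_reduction_lower:
  assumes "1 \<le> k" "stage_len y k \<le> l" "l \<le> stage_len y (Suc k)"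
  shows "dens A (reduction y) l \<ge> 1 - 2 / real (Suc k) - (if y k then 2 * eps (fst (prod_decode k)) else 0)"
proof -
  define t where "t = 1 / real (Suc k)"
  define e where "e = eps (fst (prod_decode k))"
  obtain k' where k': "k = Suc k'" using assms(1) by (cases k) auto
  have start: "dens A (stage_pt y k) (stage_len y k) > 1 - t"
    using step_spec(3)[OF stage_step[of y k']] k' unfolding t_def by simp
  have "min (dens A (stage_pt y k) (stage_len y k)) (if y k then 1 - 2 * e else 1) \<ge> 1 - t - (if y k then 2 * e else 0)"
    using start eps_pos[of "fst (prod_decode k)"] unfolding t_def e_def by (auto simp: min_def)
  moreover have "dens A (stage_pt y (Suc k)) l \<ge>
      min (dens A (stage_pt y k) (stage_len y k)) (if y k then 1 - 2 * e else 1) - t"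
    using step_spec(4)[OF stage_step[of y k]] assms(2,3) unfolding t_def e_def by simp
  moreover have "2 / real (Suc k) = t + t" unfolding t_def by simp
  ultimately show ?thesis using dens_reduction[OF assms(3)] unfolding e_def by linarith
qed

text \<open>If all rows of y are finite, the error terms of dens_reduction_lower tend to 0:
  only finitely many stages dip for rows m \<le> M.\<close>
lemma finite_rows_error_small:
  assumes "y \<in> finite_rows" "r > 0"
  shows "\<exists>K. \<forall>k\<ge>K. 2 / real (Suc k) + (if y k then 2 * eps (fst (prod_decode k)) else 0) < r"
proof -
  obtain M where M: "(1/2::real) ^ M < r / 2" using real_arch_pow_inv[of "r/2" "1/2"] assms(2) by auto
  define S where "S = {k. y k \<and> fst (prod_decode k) \<le> M}"
  have "S \<subseteq> prod_encode ` (\<Union>m\<in>{..M}. {m} \<times> {s. y (prod_encode (m, s))})"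
  proof
    fix k assume "k \<in> S"
    obtain m s where ms: "prod_decode k = (m, s)" by (cases "prod_decode k")
    have "k = prod_encode (m, s)" using ms by (metis prod_decode_inverse)
    then show "k \<in> prod_encode ` (\<Union>m\<in>{..M}. {m} \<times> {s. y (prod_encode (m, s))})"
      using \<open>k \<in> S\<close> ms unfolding S_def by force
  qed
  moreover have "finite (\<Union>m\<in>{..M}. {m} \<times> {s. y (prod_encode (m, s))})"
    using assms(1) unfolding finite_rows_def by auto
  ultimately have "finite S" by (meson finite_imageI finite_subset)
  then obtain K1 where K1: "S \<subseteq> {..<K1}" using finite_nat_bounded by blast
  obtain K2 :: nat where K2: "4 / r < real K2" using reals_Archimedean2 by blast
  have "2 / real (Suc k) + (if y k then 2 * eps (fst (prod_decode k)) else 0) < r" if "k \<ge> max K1 K2" for k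
  proof -
    have "4 / r < real (Suc k)" using K2 that by simp
    then have "4 < r * real (Suc k)" using assms(2) by (simp add: field_simps)
    then have "2 / real (Suc k) < r / 2" by (simp add: field_simps)
    moreover have "(if y k then 2 * eps (fst (prod_decode k)) else 0) < r / 2"
    proof (cases "y k")
      case True
      then have "M < fst (prod_decode k)" using K1 that unfolding S_def by auto
      then have "2 * eps (fst (prod_decode k)) \<le> (1/2) ^ M"
        using eps_mono[of M "fst (prod_decode k)"] unfolding eps_def by simp
      then show ?thesis using True M by simp
    qed (use assms(2) in simp)
    ultimately show ?thesis by simp
  qed
  then show ?thesis by blast
qed

lemma reduction_Phi_if_finite_rows:
  assumes "y \<in> finite_rows"
  shows "reduction y \<in> Phi A"
  unfolding Phi_dens mem_Collect_eq
proof (rule LIMSEQ_I)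
  fix r :: real assume r: "0 < r"
  obtain K where K: "\<And>k. k \<ge> K \<Longrightarrow> 2 / real (Suc k) + (if y k then 2 * eps (fst (prod_decode k)) else 0) < r"
    using finite_rows_error_small[OF assms r] by blast
  have "norm (dens A (reduction y) l - 1) < r" if l: "l \<ge> stage_len y (max K 1)" for l
  proof -
    obtain k where k: "max K 1 \<le> k" "stage_len y k \<le> l" "l \<le> stage_len y (Suc k)"
      using find_stage[OF l] by blast
    then show ?thesis
      using dens_reduction_lower[of k y l] dens_le1[OF measurable, of "reduction y" l] K[of k] by simp
  qed
  then show "\<exists>N. \<forall>l\<ge>N. norm (dens A (reduction y) l - 1) < r" by blast
qed

text \<open>Conversely, an infinite row m makes the density along reduction y fall to
  1 - eps m infinitely often.\<close>
lemma finite_rows_if_reduction_Phi: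
  assumes "reduction y \<in> Phi A"
  shows "y \<in> finite_rows"
  unfolding finite_rows_def mem_Collect_eq
proof (rule allI, rule ccontr)
  fix m assume inf: "infinite {s. y (prod_encode (m, s))}"
  have "(\<lambda>n. dens A (reduction y) n) \<longlonglongrightarrow> 1" using assms unfolding Phi_dens by simp
  then obtain N where N: "\<And>n. n \<ge> N \<Longrightarrow> norm (dens A (reduction y) n - 1) < eps m"
    using LIMSEQ_D eps_pos by blast
  obtain s where s: "N \<le> s" "y (prod_encode (m, s))"
    using inf unfolding infinite_nat_iff_unbounded_le by blast
  define k where "k = prod_encode (m, s)"
  obtain l where l: "stage_len y k \<le> l" "l \<le> stage_len y (Suc k)" "dens A (stage_pt y (Suc k)) l \<le> 1 - eps m"
    using step_spec(5)[OF stage_step[of y k]] s(2) unfolding k_def by auto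
  have "N \<le> l" using s(1) le_prod_encode_2[of s m] stage_len_ge[of k y] l(1) unfolding k_def by linarith
  moreover have "dens A (reduction y) l \<le> 1 - eps m" using dens_reduction[OF l(2)] l(3) by simp
  ultimately show False using N[of l] by simp
qed

theorem Phi_complete: "complete_Pi03 (Phi A)"
  unfolding complete_Pi03_def
proof (intro conjI allI impI)
  show "Pi03 (Phi A)" by (rule Pi03_Phi)
  fix B assume "Pi03 B"
  then obtain f where f: "continuous_on UNIV f" "B = f -` finite_rows" using reduce_to_finite_rows by blast
  have "continuous_on UNIV (reduction \<circ> f)"
    using f(1) reduction_continuous by (metis continuous_on_compose continuous_on_subset subset_UNIV)
  moreover have "B = (reduction \<circ> f) -` Phi A"
    using f(2) reduction_Phi_if_finite_rows finite_rows_if_reduction_Phi by auto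
  ultimately show "\<exists>f. continuous_on UNIV f \<and> B = f -` Phi A" by blast
qed

end

section \<open>The measure algebra as a metric space\<close>

definition rep :: "cantor set set \<Rightarrow> cantor set" where
  "rep a = (SOME A. A \<in> a)"

lemma sym_diff_triangle:
  assumes "A \<in> sets coin" "B \<in> sets coin" "C \<in> sets coin"
  shows "measure coin ((A - C) \<union> (C - A)) \<le> measure coin ((A - B) \<union> (B - A)) + measure coin ((B - C) \<union> (C - B))"
proof -
  have "measure coin ((A - C) \<union> (C - A)) \<le> measure coin (((A - B) \<union> (B - A)) \<union> ((B - C) \<union> (C - B)))"
    by (rule C.finite_measure_mono) (use assms in auto)
  also have "\<dots> \<le> measure coin ((A - B) \<union> (B - A)) + measure coin ((B - C) \<union> (C - B))"
    by (rule measure_Un_le) (use assms in auto)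
  finally show ?thesis .
qed

lemma null_eq_refl: "null_eq A A"
  unfolding null_eq_def by simp

lemma null_eq_sym: "null_eq A B \<Longrightarrow> null_eq B A"
  unfolding null_eq_def by (simp add: Un_commute)

lemma null_eq_trans:
  assumes "A \<in> sets coin" "B \<in> sets coin" "C \<in> sets coin" "null_eq A B" "null_eq B C"
  shows "null_eq A C"
  using sym_diff_triangle[OF assms(1-3)] assms(4,5) measure_nonneg[of coin "(A - C) \<union> (C - A)"]
  unfolding null_eq_def by linarith

lemma cls_eq:
  assumes "S \<in> sets coin" "T \<in> sets coin" "null_eq S T"
  shows "cls S = cls T"
  unfolding cls_def using assms null_eq_trans null_eq_sym by blast

lemma cls_MALG: "S \<in> sets coin \<Longrightarrow> cls S \<in> MALG"
  unfolding MALG_def by blast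

lemma MALG_rep:
  assumes "a \<in> MALG"
  shows "rep a \<in> a" "rep a \<in> sets coin" "a = cls (rep a)"
proof -
  obtain S where S: "S \<in> sets coin" "a = cls S" using assms unfolding MALG_def by blast
  have "S \<in> a" using S null_eq_refl unfolding cls_def by simp
  then show ra: "rep a \<in> a" unfolding rep_def by (rule someI)
  then show "rep a \<in> sets coin" using S unfolding cls_def by blast
  show "a = cls (rep a)" using S ra cls_eq unfolding cls_def by blast
qed

lemma MALG_mem:
  assumes "a \<in> MALG" "A \<in> a"
  shows "A \<in> sets coin" "null_eq (rep a) A"
  using assms MALG_rep(3)[OF assms(1)] unfolding cls_def by blast+

lemma rep_cls:
  assumes "S \<in> sets coin"
  shows "null_eq S (rep (cls S))" "rep (cls S) \<in> sets coin"
  using MALG_rep(1,2)[OF cls_MALG[OF assms]] unfolding cls_def by blast+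

lemma malg_dist_rep: "malg_dist a b = measure coin ((rep a - rep b) \<union> (rep b - rep a))"
  unfolding malg_dist_def rep_def ..

lemma MALG_metric: "Metric_space MALG malg_dist"
proof
  fix x y z
  show "0 \<le> malg_dist x y" unfolding malg_dist_rep by simp
  show "malg_dist x y = malg_dist y x" unfolding malg_dist_rep by (simp add: Un_commute)
  assume x: "x \<in> MALG" and y: "y \<in> MALG"
  show "malg_dist x y = 0 \<longleftrightarrow> x = y"
  proof
    assume "malg_dist x y = 0"
    then have "null_eq (rep x) (rep y)" unfolding malg_dist_rep null_eq_def .
    then show "x = y" using MALG_rep[OF x] MALG_rep[OF y] cls_eq by metis
  qed (simp add: malg_dist_rep)
  assume z: "z \<in> MALG"
  show "malg_dist x z \<le> malg_dist x y + malg_dist y z"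
    unfolding malg_dist_rep by (rule sym_diff_triangle[OF MALG_rep(2)[OF x] MALG_rep(2)[OF y] MALG_rep(2)[OF z]])
qed

interpretation MM: Metric_space MALG malg_dist by (rule MALG_metric)

lemma malg_top_eq: "malg_top = MM.mtopology"
  unfolding malg_top_def by simp

section \<open>Climbs and dips are open conditions\<close>

lemma can_climb_null_eq:
  "A \<in> sets coin \<Longrightarrow> B \<in> sets coin \<Longrightarrow> null_eq A B \<Longrightarrow> can_climb A z n k j = can_climb B z n k j"
  unfolding can_climb_def by (simp only: dens_null_eq)

lemma can_dip_null_eq:
  "A \<in> sets coin \<Longrightarrow> B \<in> sets coin \<Longrightarrow> null_eq A B \<Longrightarrow> can_dip A z n = can_dip B z n"
  unfolding can_dip_def by (simp only: dens_null_eq)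

lemma can_climb_prefix:
  assumes "can_climb A z n k j" "\<And>i. i < n \<Longrightarrow> z2 i = z i"
  shows "can_climb A z2 n k j"
proof -
  have "dens A z2 n = dens A z n" by (rule dens_cong) (use assms(2) in simp)
  then show ?thesis using assms unfolding can_climb_def by metis
qed

lemma can_dip_prefix:
  assumes "can_dip A z n" "\<And>i. i < n \<Longrightarrow> z2 i = z i"
  shows "can_dip A z2 n"
  using assms unfolding can_dip_def by metis

text \<open>A climb witnessed for A (finitely many strict inequalities between densities at levels
  at most n') is also witnessed for every B close enough to A.\<close>
lemma can_climb_open:
  assumes A: "A \<in> sets coin" and climb: "can_climb A z n k j"
  shows "\<exists>r>0. \<forall>B\<in>sets coin. measure coin ((A - B) \<union> (B - A)) < r \<longrightarrow> can_climb B z n k j"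
proof -
  obtain z' n' where w: "n < n'" "\<forall>i<n. z' i = z i" "dens A z' n' > 1 - 1 / real (Suc k)"
      "\<forall>i. n \<le> i \<and> i \<le> n' \<longrightarrow> dens A z' i > dens A z n - 1 / real (Suc j)"
    using climb unfolding can_climb_def by blast
  define g where "g = (\<lambda>i. dens A z' i - dens A z n + 1 / real (Suc j))"
  define s where "s = min (dens A z' n' - (1 - 1 / real (Suc k))) (Min (g ` {n..n'}))"
  have fin: "finite (g ` {n..n'})" "g ` {n..n'} \<noteq> {}" using w(1) by auto
  have "Min (g ` {n..n'}) > 0" using fin w(4) unfolding g_def by (subst Min_gr_iff) auto
  then have s0: "s > 0" unfolding s_def using w(3) by simp
  have sg: "s \<le> g i" if "n \<le> i" "i \<le> n'" for i
  proof -
    have "Min (g ` {n..n'}) \<le> g i" using fin(1) that by (intro Min_le) auto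
    then show ?thesis unfolding s_def by simp
  qed
  have "can_climb B z n k j" if B: "B \<in> sets coin" "measure coin ((A - B) \<union> (B - A)) < s / (2 * 2^n')" for B
  proof -
    have close: "\<bar>dens A y i - dens B y i\<bar> < s / 2" if "i \<le> n'" for y i
      using dens_perturb[OF A B(1) that, of y] B(2) by (simp add: field_simps)
    have "s \<le> dens A z' n' - (1 - 1 / real (Suc k))" unfolding s_def by simp
    then have "dens B z' n' > 1 - 1 / real (Suc k)"
      using close[OF order_refl, of z'] s0 by linarith
    moreover have "dens B z' i > dens B z n - 1 / real (Suc j)" if "n \<le> i" "i \<le> n'" for i
      using sg[OF that] close[OF that(2), of z'] close[of n z] w(1) unfolding g_def by linarith
    ultimately show ?thesis unfolding can_climb_def using w(1,2) by blast
  qed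
  then show ?thesis using s0 by (intro exI[of _ "s / (2 * 2^n')"]) auto
qed

lemma can_dip_open:
  assumes A: "A \<in> sets coin" and dip: "can_dip A z n"
  shows "\<exists>r>0. \<forall>B\<in>sets coin. measure coin ((A - B) \<union> (B - A)) < r \<longrightarrow> can_dip B z n"
proof -
  obtain z' n' where w: "n \<le> n'" "\<forall>i<n. z' i = z i" "dens A z' n' < 1/2"
    using dip unfolding can_dip_def by blast
  define s where "s = 1/2 - dens A z' n'"
  have s0: "s > 0" using w(3) unfolding s_def by simp
  have "can_dip B z n" if B: "B \<in> sets coin" "measure coin ((A - B) \<union> (B - A)) < s / 2^n'" for B
  proof -
    have "dens B z' n' < 1/2"
      using dens_perturb[OF A B(1) order_refl, of z' n'] B(2) unfolding s_def by (simp add: field_simps)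
    then show ?thesis unfolding can_dip_def using w(1,2) by blast
  qed
  then show ?thesis using s0 by (intro exI[of _ "s / 2^n'"]) auto
qed

section \<open>Climbs and dips are dense conditions\<close>

definition greedy_bit :: "cantor set \<Rightarrow> cantor \<Rightarrow> nat \<Rightarrow> bool" where
  "greedy_bit A y m = (SOME b. dens A (y(m:=b)) (Suc m) \<ge> dens A y m)"

primrec greedy_path :: "cantor set \<Rightarrow> cantor \<Rightarrow> nat \<Rightarrow> nat \<Rightarrow> cantor" where
  "greedy_path A z n 0 = z"
| "greedy_path A z n (Suc s) = (greedy_path A z n s)(n + s := greedy_bit A (greedy_path A z n s) (n + s))"

lemma greedy_path_agree: "s \<le> s' \<Longrightarrow> i < n + s \<Longrightarrow> greedy_path A z n s' i = greedy_path A z n s i"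
  by (induction s' rule: dec_induct) simp_all

lemma greedy_path_dens_stage:
  assumes "A \<in> sets coin"
  shows "dens A (greedy_path A z n s) (n + s) \<ge> dens A z n"
proof (induction s)
  case (Suc s)
  let ?y = "greedy_path A z n s"
  have "dens A (?y(n + s := greedy_bit A ?y (n + s))) (Suc (n + s)) \<ge> dens A ?y (n + s)"
    unfolding greedy_bit_def by (rule someI_ex[OF dens_greedy[OF assms]])
  then have "dens A (greedy_path A z n (Suc s)) (n + Suc s) \<ge> dens A ?y (n + s)" by simp
  then show ?case using Suc.IH by linarith
qed simp

lemma greedy_path_dens:
  assumes "A \<in> sets coin" "n \<le> i" "i \<le> n + L"
  shows "dens A (greedy_path A z n L) i \<ge> dens A z n"
proof -
  have "dens A (greedy_path A z n L) i = dens A (greedy_path A z n (i - n)) i"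
    by (rule dens_cong) (use assms(2,3) greedy_path_agree[of "i - n" L _ n A z] in simp)
  then show ?thesis using greedy_path_dens_stage[OF assms(1), of z n "i - n"] assms(2) by simp
qed

lemma small_pow: "r > 0 \<Longrightarrow> \<exists>L::nat. L \<ge> 1 \<and> (1/2::real)^L < r"
proof -
  assume "r > 0"
  then obtain L where "(1/2::real)^L < r" using real_arch_pow_inv[of r "1/2"] by auto
  moreover have "(1/2::real)^(Suc L) \<le> (1/2)^L" by (rule power_decreasing) auto
  ultimately have "(1/2::real)^(Suc L) < r" by linarith
  then show ?thesis by (intro exI[of _ "Suc L"]) (simp only: le_add1 Suc_eq_plus1_left simp_thms)
qed

lemma sym_diff_in_nbhd:
  assumes "(A - B) \<union> (B - A) \<subseteq> nbhd w n'"
  shows "measure coin ((A - B) \<union> (B - A)) \<le> (1/2)^n'"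
  using C.finite_measure_mono[OF assms nbhd_sets] by (simp add: nbhd_measure)

text \<open>To create a climb, fill in the cylinder at the end of a long greedy path: densities
  along the path only increase, and the level n density changes by at most 2^-L.\<close>
lemma can_climb_dense:
  assumes A: "A \<in> sets coin" and r: "r > 0"
  shows "\<exists>B\<in>sets coin. measure coin ((A - B) \<union> (B - A)) < r \<and> can_climb B z n k j"
proof -
  obtain L :: nat where L: "L \<ge> 1" "(1/2::real)^L < min r (1 / real (Suc j))"
    using small_pow[of "min r (1 / real (Suc j))"] r by auto
  define w where "w = greedy_path A z n L"
  define B where "B = A \<union> nbhd w (n + L)"
  have Bs: "B \<in> sets coin" unfolding B_def using A nbhd_sets by auto
  have d: "measure coin ((A - B) \<union> (B - A)) \<le> (1/2)^(n + L)"
    by (rule sym_diff_in_nbhd) (auto simp: B_def)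
  also have "\<dots> \<le> (1/2)^L" by (rule power_decreasing) auto
  finally have close: "measure coin ((A - B) \<union> (B - A)) < r" using L(2) by simp
  have "2^n * measure coin ((A - B) \<union> (B - A)) \<le> 2^n * (1/2)^(n + L)"
    using d by (rule mult_left_mono) simp
  then have "dens B z n \<le> dens A z n + 2^n * (1/2)^(n + L)"
    using dens_perturb[OF A Bs order_refl, of z n] unfolding abs_le_iff by linarith
  also have "2^n * (1/2::real)^(n + L) = (1/2)^L" by (simp add: power_add power_divide)
  finally have dz: "dens B z n < dens A z n + 1 / real (Suc j)" using L(2) by simp
  have "can_climb B z n k j" unfolding can_climb_def
  proof (intro exI[of _ w] exI[of _ "n + L"] conjI allI impI)
    show "n < n + L" using L(1) by simp
    show "w i = z i" if "i < n" for i unfolding w_def using greedy_path_agree[of 0 L i n A z] that by simp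
    show "dens B w (n + L) > 1 - 1 / real (Suc k)" using dens_full[of w "n + L" B] by (simp add: B_def)
    show "dens B w i > dens B z n - 1 / real (Suc j)" if "n \<le> i \<and> i \<le> n + L" for i
      using greedy_path_dens[OF A, of n i L z] that dens_mono_set[of A B w i] Bs dz
      unfolding w_def B_def by auto
  qed
  then show ?thesis using Bs close by blast
qed

text \<open>To create a dip, remove a small cylinder extending z|n.\<close>
lemma can_dip_dense:
  assumes A: "A \<in> sets coin" and r: "r > 0"
  shows "\<exists>B\<in>sets coin. measure coin ((A - B) \<union> (B - A)) < r \<and> can_dip B z n"
proof -
  obtain L :: nat where L: "L \<ge> 1" "(1/2::real)^L < r" using small_pow[OF r] by auto
  define B where "B = A - nbhd z (n + L)"
  have Bs: "B \<in> sets coin" unfolding B_def using A nbhd_sets by auto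
  have "measure coin ((A - B) \<union> (B - A)) \<le> (1/2)^(n + L)"
    by (rule sym_diff_in_nbhd) (auto simp: B_def)
  also have "\<dots> \<le> (1/2)^L" by (rule power_decreasing) auto
  finally have "measure coin ((A - B) \<union> (B - A)) < r" using L(2) by simp
  moreover have "dens B z (n + L) = 0" by (rule dens_empty) (auto simp: B_def)
  then have "can_dip B z n" unfolding can_dip_def by (intro exI[of _ z] exI[of _ "n + L"]) simp
  ultimately show ?thesis using Bs by blast
qed

section \<open>Generic classes form a dense G_delta\<close>

text \<open>The countably many instances of the climb and dip conditions, one for each finite
  prefix (as a bool list) and, for climbs, each pair of accuracies k, j.\<close>
type_synonym condition = "(bool list \<times> nat \<times> nat) + bool list"

definition of_prefix :: "bool list \<Rightarrow> cantor" where
  "of_prefix l = (\<lambda>i. i < length l \<and> l ! i)"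

lemma of_prefix_map: "i < n \<Longrightarrow> of_prefix (map z [0..<n]) i = z i"
  unfolding of_prefix_def by simp

definition satisfies :: "condition \<Rightarrow> cantor set \<Rightarrow> bool" where
  "satisfies q A = (case q of
      Inl (l, k, j) \<Rightarrow> can_climb A (of_prefix l) (length l) k j
    | Inr l \<Rightarrow> can_dip A (of_prefix l) (length l))"

lemma satisfies_null_eq:
  "A \<in> sets coin \<Longrightarrow> B \<in> sets coin \<Longrightarrow> null_eq A B \<Longrightarrow> satisfies q A = satisfies q B"
  unfolding satisfies_def using can_climb_null_eq can_dip_null_eq by (auto split: sum.splits)

lemma satisfies_open:
  assumes "A \<in> sets coin" "satisfies q A"
  shows "\<exists>r>0. \<forall>B\<in>sets coin. measure coin ((A - B) \<union> (B - A)) < r \<longrightarrow> satisfies q B"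
  using assms can_climb_open[OF assms(1)] can_dip_open[OF assms(1)]
  unfolding satisfies_def by (auto split: sum.splits)

lemma satisfies_dense:
  assumes "A \<in> sets coin" "r > 0"
  shows "\<exists>B\<in>sets coin. measure coin ((A - B) \<union> (B - A)) < r \<and> satisfies q B"
proof (cases q)
  case (Inl c)
  then obtain l k j where "q = Inl (l, k, j)" by (cases c) auto
  then show ?thesis using can_climb_dense[OF assms] unfolding satisfies_def by simp
next
  case (Inr l)
  then show ?thesis using can_dip_dense[OF assms] unfolding satisfies_def by simp
qed

definition cond_set :: "condition \<Rightarrow> cantor set set set" where
  "cond_set q = {a \<in> MALG. satisfies q (rep a)}"

lemma cond_set_open: "openin malg_top (cond_set q)"
  unfolding malg_top_eq MM.openin_mtopology
proof (intro conjI allI impI)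
  show "cond_set q \<subseteq> MALG" unfolding cond_set_def by auto
  fix a assume "a \<in> cond_set q"
  then have a: "a \<in> MALG" "satisfies q (rep a)" unfolding cond_set_def by auto
  obtain r where r: "r > 0"
    "\<And>B. B \<in> sets coin \<Longrightarrow> measure coin ((rep a - B) \<union> (B - rep a)) < r \<Longrightarrow> satisfies q B"
    using satisfies_open[OF MALG_rep(2)[OF a(1)] a(2)] by blast
  have "MM.mball a r \<subseteq> cond_set q"
  proof
    fix b assume "b \<in> MM.mball a r"
    then have b: "b \<in> MALG" "malg_dist a b < r" by auto
    then show "b \<in> cond_set q"
      using r(2)[OF MALG_rep(2)[OF b(1)]] unfolding cond_set_def malg_dist_rep by simp
  qed
  then show "\<exists>r>0. MM.mball a r \<subseteq> cond_set q" using r(1) by blast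
qed

text \<open>Density: near any class a there is a class cls B with B satisfying q; by
  satisfies_null_eq its representative satisfies q as well.\<close>
lemma cond_set_dense: "malg_top closure_of (cond_set q) = topspace malg_top"
  unfolding malg_top_eq MM.metric_closure_of MM.topspace_mtopology
proof (intro equalityI subsetI CollectI conjI allI impI)
  fix a r assume a: "a \<in> MALG" and r: "(r::real) > 0"
  obtain B where B: "B \<in> sets coin" "measure coin ((rep a - B) \<union> (B - rep a)) < r" "satisfies q B"
    using satisfies_dense[OF MALG_rep(2)[OF a] r] by blast
  note b = rep_cls[OF B(1)]
  have "cls B \<in> cond_set q"
    using satisfies_null_eq[OF B(1) b(2,1)] B(3) cls_MALG[OF B(1)] unfolding cond_set_def by simp
  moreover have "malg_dist a (cls B) < r"
    using sym_diff_triangle[OF MALG_rep(2)[OF a] B(1) b(2)] B(2) b(1)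
    unfolding malg_dist_rep null_eq_def by simp
  ultimately show "\<exists>b\<in>cond_set q. b \<in> MM.mball a r" using a cls_MALG[OF B(1)] by auto
qed auto

lemma generic_if_in_all_cond_sets:
  assumes a: "a \<in> MALG" "\<And>q. a \<in> cond_set q" and A: "A \<in> a"
  shows "generic_set A"
proof
  show As: "A \<in> sets coin" by (rule MALG_mem(1)[OF a(1) A])
  have sat: "satisfies q A" for q
    using a(2)[of q] satisfies_null_eq[OF MALG_rep(2)[OF a(1)] As MALG_mem(2)[OF a(1) A]]
    unfolding cond_set_def by simp
  show "can_climb A z n k j" for z n k j
    using can_climb_prefix[of A "of_prefix (map z [0..<n])" n k j z] sat[of "Inl (map z [0..<n], k, j)"]
    unfolding satisfies_def by (simp add: of_prefix_map)
  show "can_dip A z n" for z n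
    using can_dip_prefix[of A "of_prefix (map z [0..<n])" n z] sat[of "Inr (map z [0..<n])"]
    unfolding satisfies_def by (simp add: of_prefix_map)
qed

theorem theorem1p7:
  shows "comeager_in malg_top {a \<in> MALG. \<forall>A \<in> a. complete_Pi03 (Phi A)}"
proof (rule comeager_if_contains_open_dense_inter)
  show "openin malg_top (cond_set (from_nat i))" for i by (rule cond_set_open)
  show "malg_top closure_of cond_set (from_nat i) = topspace malg_top" for i by (rule cond_set_dense)
  show "topspace malg_top \<inter> (\<Inter>i. cond_set (from_nat i)) \<subseteq> {a \<in> MALG. \<forall>A \<in> a. complete_Pi03 (Phi A)}"
  proof (intro subsetI CollectI conjI ballI)
    fix a assume a: "a \<in> topspace malg_top \<inter> (\<Inter>i. cond_set (from_nat i))"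
    then show am: "a \<in> MALG" unfolding malg_top_eq by simp
    have all: "a \<in> cond_set q" for q using a by (metis INT_iff IntD2 UNIV_I from_nat_to_nat)
    fix A assume "A \<in> a"
    then interpret generic_set A by (rule generic_if_in_all_cond_sets[OF am all])
    show "complete_Pi03 (Phi A)" by (rule Phi_complete)
  qed
qed

end
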